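(* Consider ridgeless least-squares regression with training design matrix $X\in\mathbb{R}^{M\times N_f}$ (rows $\vec{x}_a^T$ drawn from a distribution with invertible covariance), labels $y(\vec{x})=y^*(\vec{x})+\varepsilon$, model features $\vec{z}(\vec{x})\in\mathbb{R}^{N_p}$, feature matrix $Z$ with rows $\vec{z}(\vec{x}_a)^T$, and predictor $\hat{y}(\vec{x})=\vec{z}(\vec{x})\cdot Z^+\vec{y}$. Let $\vec{\beta}=\Sigma_{\vec{x}}^{-1}\operatorname{Cov}_{\vec{x}}[\vec{x},y(\vec{x})]$, $W=\Sigma_{\vec{x}}^{-1}\operatorname{Cov}_{\vec{x}}[\vec{x},\vec{z}(\vec{x})^T]$, $P_f=(WZ^+X)^T$, $\hat{x}=P_f\vec{x}$, $\Delta\vec{x}=(I_{N_f}-P_f)\vec{x}$, and $\mathcal{E}_{\mathrm{geom}}=(\Delta\vec{x}\cdot\vec{\beta})^2$. Suppose there is no label noise ($\varepsilon=0$ for training and test points) and no nonlinearity, i.e. $y^*(\vec{x})=\vec{x}\cdot\vec{\beta}$ and $\vec{z}(\vec{x})=W^T\vec{x}$ for all $\vec{x}$. Then for any test point $\vec{x}$, with expectations over the random training set $\mathcal{D}$: $\mathbb{E}_{\mathcal{D}}[(y(\vec{x})-\hat{y}(\vec{x}))^2]=\mathbb{E}_{\mathcal{D}}[\mathcal{E}_{\mathrm{geom}}]$, $\mathbb{E}_{\mathcal{D}}[\hat{y}(\vec{x})]-y^*(\vec{x})=\mathbb{E}_{\mathcal{D}}[\hat{x}\cdot\vec{\beta}]-\vec{x}\cdot\vec{\beta}$,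 and $\operatorname{Var}_{\mathcal{D}}[\hat{y}(\vec{x})]=\operatorname{Var}_{\mathcal{D}}[\hat{x}\cdot\vec{\beta}]$.
   Context: $Z^+$ is the Moore–Penrose pseudoinverse; $\operatorname{Cov}_{\vec{x}}$ is covariance over the input distribution and $\Sigma_{\vec{x}}$ its covariance matrix. The standard test error, bias and variance of the predictor are $(y(\vec{x})-\hat{y}(\vec{x}))^2$, $\mathbb{E}_{\mathcal{D}}[\hat{y}(\vec{x})]-y^*(\vec{x})$ and $\operatorname{Var}_{\mathcal{D}}[\hat{y}(\vec{x})]$; the statement says these coincide with their geometric counterparts in this noiseless linear setting. *)

theory Defs
  imports "HOL-Probability.Probability"
begin

definition pinv :: "real^'n^'m \<Rightarrow> real^'m^'n" where
  "pinv A = (THE B. A ** B ** A = A \<and> B ** A ** B = B \<and>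
                    transpose (A ** B) = A ** B \<and> transpose (B ** A) = B ** A)"

definition cov :: "'a measure \<Rightarrow> ('a \<Rightarrow> real) \<Rightarrow> ('a \<Rightarrow> real) \<Rightarrow> real" where
  "cov M f g = (\<integral>x. (f x - (\<integral>u. f u \<partial>M)) * (g x - (\<integral>u. g u \<partial>M)) \<partial>M)"

definition cov_mat :: "(real^'f) measure \<Rightarrow> real^'f^'f" where
  "cov_mat P = (\<chi> i j. cov P (\<lambda>x. x $ i) (\<lambda>x. x $ j))"

definition beta_vec :: "(real^'f) measure \<Rightarrow> (real^'f \<Rightarrow> real) \<Rightarrow> real^'f" where
  "beta_vec P y = matrix_inv (cov_mat P) *v (\<chi> i. cov P (\<lambda>x. x $ i) y)"

definition W_mat :: "(real^'f) measure \<Rightarrow> (real^'f \<Rightarrow> real^'p) \<Rightarrow> real^'p^'f" where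
  "W_mat P z = matrix_inv (cov_mat P) ** (\<chi> i k. cov P (\<lambda>x. x $ i) (\<lambda>x. z x $ k))"

definition feat_mat :: "(real^'f \<Rightarrow> real^'p) \<Rightarrow> real^'f^'m \<Rightarrow> real^'p^'m" where
  "feat_mat z X = (\<chi> a. z (X $ a))"

definition predictor :: "(real^'f \<Rightarrow> real) \<Rightarrow> (real^'f \<Rightarrow> real^'p) \<Rightarrow> real^'f^'m \<Rightarrow> real^'f \<Rightarrow> real" where
  "predictor y z X x = z x \<bullet> (pinv (feat_mat z X) *v (\<chi> a. y (X $ a)))"

definition Pf_mat :: "real^'p^'f \<Rightarrow> (real^'f \<Rightarrow> real^'p) \<Rightarrow> real^'f^'m \<Rightarrow> real^'f^'f" where
  "Pf_mat W z X = transpose (W ** pinv (feat_mat z X) ** X)"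

end

theory Submission
  imports Defs
begin

text \<open>Without noise or nonlinearity the labels are \<open>X \<beta>\<close> and the features are \<open>W\<^sup>T x\<close>, so
  \<open>z(x) \<bullet> Z\<^sup>+ y = W\<^sup>T x \<bullet> Z\<^sup>+ X \<beta> = (W Z\<^sup>+ X)\<^sup>T x \<bullet> \<beta> = P\<^sub>f x \<bullet> \<beta>\<close> for every training set.
  All three identities therefore already hold pointwise in \<open>X\<close>, before taking expectations.\<close>

lemma rows_inner_eq_matrix_vector_mult:
  fixes X :: "real^'n^'m"
  shows "(\<chi> a. X $ a \<bullet> v) = X *v v"
  by (simp add: vec_eq_iff matrix_vector_mult_def inner_vec_def)

lemma inner_transpose_matrix_chain:
  fixes W :: "real^'p^'f" and B :: "real^'m^'p" and X :: "real^'f^'m"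
  shows "(transpose W *v x) \<bullet> (B *v (X *v v)) = (transpose (W ** B ** X) *v x) \<bullet> v"
  by (simp add: dot_lmul_matrix matrix_vector_mul_assoc[symmetric] vector_matrix_mul_assoc)

lemma predictor_linear_model:
  assumes "\<And>u. y u = u \<bullet> \<beta>"
    and "\<And>u. z u = transpose W *v u"
  shows "predictor y z X x = (Pf_mat W z X *v x) \<bullet> \<beta>"
proof -
  have labels: "(\<chi> a. y (X $ a)) = X *v \<beta>"
    using assms(1) by (simp add: rows_inner_eq_matrix_vector_mult)
  show ?thesis
    unfolding predictor_def Pf_mat_def assms(2) labels by (rule inner_transpose_matrix_chain)
qed

lemma residual_linear_model:
  assumes "\<And>u. y u = u \<bullet> \<beta>"
    and "\<And>u. z u = transpose W *v u"
  shows "y x - predictor y z X x = ((mat 1 - Pf_mat W z X) *v x) \<bullet> \<beta>"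
  using assms by (simp add: predictor_linear_model matrix_vector_mult_diff_rdistrib inner_diff_left)

theorem theorem8:
  fixes P :: "(real^'f) measure"             \<comment> \<open>input distribution\<close>
    and D :: "(real^'f^'m) measure"          \<comment> \<open>distribution of the training design matrix X\<close>
    and ystar :: "real^'f \<Rightarrow> real"
    and y :: "real^'f \<Rightarrow> real"
    and z :: "real^'f \<Rightarrow> real^'p"
    and x :: "real^'f"
  defines "\<beta> \<equiv> beta_vec P y"
    and "W \<equiv> W_mat P z"
  assumes "prob_space P"
    and "invertible (cov_mat P)"
    and "prob_space D"
    and "prob_space.indep_vars D (\<lambda>_. borel) (\<lambda>a X. X $ a) UNIV"
    and "\<And>a. distr D borel (\<lambda>X. X $ a) = P"
    \<comment> \<open>no label noise: y = y^*\<close>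
    and "\<And>u. y u = ystar u"
    \<comment> \<open>no nonlinearity\<close>
    and "\<And>u. ystar u = u \<bullet> \<beta>"
    and "\<And>u. z u = transpose W *v u"
  shows "(prob_space.expectation D (\<lambda>X. (y x - predictor y z X x)\<^sup>2)
           = prob_space.expectation D (\<lambda>X. (((mat 1 - Pf_mat W z X) *v x) \<bullet> \<beta>)\<^sup>2))
    \<and> (prob_space.expectation D (\<lambda>X. predictor y z X x) - ystar x
           = prob_space.expectation D (\<lambda>X. (Pf_mat W z X *v x) \<bullet> \<beta>) - x \<bullet> \<beta>)
    \<and> (prob_space.variance D (\<lambda>X. predictor y z X x)
           = prob_space.variance D (\<lambda>X. (Pf_mat W z X *v x) \<bullet> \<beta>))"
proof -
  have linear_labels: "\<And>u. y u = u \<bullet> \<beta>"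
    using assms(8,9) by simp
  note linear_features = assms(10)
  have residual: "y x - predictor y z X x = ((mat 1 - Pf_mat W z X) *v x) \<bullet> \<beta>" for X
    using linear_labels linear_features by (rule residual_linear_model)
  have prediction: "predictor y z X x = (Pf_mat W z X *v x) \<bullet> \<beta>" for X
    using linear_labels linear_features by (rule predictor_linear_model)
  show ?thesis
    unfolding residual unfolding prediction assms(9) by simp
qed

end
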